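(* Let $M$ be an exact $\mathfrak{K}$-module. Let $M'_1\subseteq M_1$ be an $s_1$-invariant, uniquely $p$-divisible $\mathbb{Z}/2$-graded subgroup. Let $M'_0:=\alpha_{01}(M'_1)$ and $M'_2:=\alpha_{21}(M'_1)$. Then $M'=M'_0\oplus M'_1\oplus M'_2$ is an exact $\mathfrak{K}$-submodule of $M$. It is uniquely $p$-divisible and isomorphic to an exact $\mathfrak{K}$-module of the form $E(X,Y,Z)$ with $X=M'_0$ and $Z=M'_2$. The quotient $M/M'$ is also exact.
   Context: Fix a prime $p$, $N(x)=1+x+\dots+x^{p-1}$, $\vartheta$ a primitive $p$-th root of unity. A $\mathfrak{K}$-module $M$ amounts to $\mathbb{Z}/2$-graded abelian groups $M_0,M_1,M_2$ with homomorphisms $\alpha_{jk}\colon M_k\to M_j$ ($j\neq k$; $\alpha_{12},\alpha_{21}$ grading-reversing, others grading-preserving) with $\alpha_{jk}\alpha_{km}=0$ for $\{j,k,m\}=\{0,1,2\}$ and, for $t_0:=1-\alpha_{02}\alpha_{20}$ on $M_0$, $s_1:=1-\alpha_{12}\alpha_{21}$ on $M_1$, $t_2:=1-\alpha_{20}\alpha_{02}$, $s_2:=1-\alpha_{21}\alpha_{12}$ on $M_2$: $\alpha_{01}\alpha_{10}=N(t_0)$, $\alpha_{10}\alpha_{01}=N(s_1)$, $N(t_2)+N(s_2)=p$. $M$ is exact if the cyclic sequences $M_0\xrightarrow{\alpha_{10}}M_1\xrightarrow{\alpha_{21}}M_2\xrightarrow{\alpha_{02}}M_0$ and $M_0\xrightarrow{\alpha_{20}}M_2\xrightarrow{\alpha_{12}}M_1\xrightarrow{\alpha_{01}}M_0$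 are exact. Uniquely $p$-divisible: multiplication by $p$ bijective. For a $\mathbb{Z}/2$-graded $\mathbb{Z}[1/p]$-module $X$ and $\mathbb{Z}/2$-graded $\mathbb{Z}[\vartheta,1/p]$-modules $Y,Z$, $E(X,Y,Z)$ is the exact $\mathfrak{K}$-module with $M_0=X\oplus Y$, $M_1=X\oplus Z$, $M_2=Y\oplus\Sigma Z$ ($\Sigma$ = parity reversal), $\alpha_{01}(x,z)=(x,0)$, $\alpha_{10}(x,y)=(px,0)$, $\alpha_{12}(y,z)=(0,(1-\vartheta)z)$, $\alpha_{21}(x,z)=(0,z)$, $\alpha_{20}(x,y)=(y,0)$, $\alpha_{02}(y,z)=(0,(1-\vartheta)y)$. *)

theory Defs
  imports Main "HOL-Library.Product_Plus" "HOL-Computational_Algebra.Primes"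
begin

(* A Z/2-graded subgroup of the ambient abelian group 'a is given by its two
   homogeneous pieces G False (even) and G True (odd); the group is their
   internal direct sum. *)

definition subgrp :: "'a::ab_group_add set \<Rightarrow> bool" where
  "subgrp S \<longleftrightarrow> 0 \<in> S \<and> (\<forall>x\<in>S. \<forall>y\<in>S. x + y \<in> S) \<and> (\<forall>x\<in>S. - x \<in> S)"

definition graded_group :: "(bool \<Rightarrow> 'a::ab_group_add set) \<Rightarrow> bool" where
  "graded_group G \<longleftrightarrow> (\<forall>d. subgrp (G d)) \<and> G False \<inter> G True = {0}"

definition car :: "(bool \<Rightarrow> 'a::ab_group_add set) \<Rightarrow> 'a set" where
  "car G = {x + y | x y. x \<in> G False \<and> y \<in> G True}"

definition graded_subgroup :: "(bool \<Rightarrow> 'a::ab_group_add set) \<Rightarrow> (bool \<Rightarrow> 'a set) \<Rightarrow> bool" where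
  "graded_subgroup H G \<longleftrightarrow> (\<forall>d. subgrp (H d) \<and> H d \<subseteq> G d)"

(* homomorphism of graded groups; flip = True means grading-reversing *)
definition ghom :: "bool \<Rightarrow> (bool \<Rightarrow> 'a::ab_group_add set) \<Rightarrow> (bool \<Rightarrow> 'b::ab_group_add set) \<Rightarrow> ('a \<Rightarrow> 'b) \<Rightarrow> bool" where
  "ghom flip G H f \<longleftrightarrow> (\<forall>d. \<forall>x\<in>G d. f x \<in> H (d \<noteq> flip))
     \<and> (\<forall>x\<in>car G. \<forall>y\<in>car G. f (x + y) = f x + f y)"

definition nmul :: "nat \<Rightarrow> 'a::ab_group_add \<Rightarrow> 'a" where
  "nmul n x = (\<Sum>i<n. x)"

definition Nop :: "nat \<Rightarrow> ('a::ab_group_add \<Rightarrow> 'a) \<Rightarrow> 'a \<Rightarrow> 'a" where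
  "Nop p f x = (\<Sum>i<p. (f ^^ i) x)"

definition uniq_pdiv :: "nat \<Rightarrow> (bool \<Rightarrow> 'a::ab_group_add set) \<Rightarrow> bool" where
  "uniq_pdiv p G \<longleftrightarrow> bij_betw (nmul p) (car G) (car G)"

record 'a kmod =
  kM0 :: "bool \<Rightarrow> 'a set"
  kM1 :: "bool \<Rightarrow> 'a set"
  kM2 :: "bool \<Rightarrow> 'a set"
  a01 :: "'a \<Rightarrow> 'a"
  a10 :: "'a \<Rightarrow> 'a"
  a12 :: "'a \<Rightarrow> 'a"
  a21 :: "'a \<Rightarrow> 'a"
  a02 :: "'a \<Rightarrow> 'a"
  a20 :: "'a \<Rightarrow> 'a"

definition kmodule :: "nat \<Rightarrow> 'a::ab_group_add kmod \<Rightarrow> bool" where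
  "kmodule p M \<longleftrightarrow>
     graded_group (kM0 M) \<and> graded_group (kM1 M) \<and> graded_group (kM2 M) \<and>
     ghom False (kM1 M) (kM0 M) (a01 M) \<and> ghom False (kM0 M) (kM1 M) (a10 M) \<and>
     ghom True (kM2 M) (kM1 M) (a12 M) \<and> ghom True (kM1 M) (kM2 M) (a21 M) \<and>
     ghom False (kM2 M) (kM0 M) (a02 M) \<and> ghom False (kM0 M) (kM2 M) (a20 M) \<and>
     (\<forall>x\<in>car (kM2 M). a01 M (a12 M x) = 0) \<and>
     (\<forall>x\<in>car (kM1 M). a02 M (a21 M x) = 0) \<and>
     (\<forall>x\<in>car (kM2 M). a10 M (a02 M x) = 0) \<and>
     (\<forall>x\<in>car (kM0 M). a12 M (a20 M x) = 0) \<and>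
     (\<forall>x\<in>car (kM1 M). a20 M (a01 M x) = 0) \<and>
     (\<forall>x\<in>car (kM0 M). a21 M (a10 M x) = 0) \<and>
     (\<forall>x\<in>car (kM0 M). a01 M (a10 M x) = Nop p (\<lambda>y. y - a02 M (a20 M y)) x) \<and>
     (\<forall>x\<in>car (kM1 M). a10 M (a01 M x) = Nop p (\<lambda>y. y - a12 M (a21 M y)) x) \<and>
     (\<forall>x\<in>car (kM2 M). Nop p (\<lambda>y. y - a20 M (a02 M y)) x
                        + Nop p (\<lambda>y. y - a21 M (a12 M y)) x = nmul p x)"


definition exact_at :: "'a set \<Rightarrow> ('a \<Rightarrow> 'a) \<Rightarrow> 'a::ab_group_add set \<Rightarrow> ('a \<Rightarrow> 'a) \<Rightarrow> bool" where
  "exact_at A f B g \<longleftrightarrow> f ` A = {x \<in> B. g x = 0}"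

definition kexact :: "'a::ab_group_add kmod \<Rightarrow> bool" where
  "kexact M \<longleftrightarrow>
     exact_at (car (kM0 M)) (a10 M) (car (kM1 M)) (a21 M) \<and>
     exact_at (car (kM1 M)) (a21 M) (car (kM2 M)) (a02 M) \<and>
     exact_at (car (kM2 M)) (a02 M) (car (kM0 M)) (a10 M) \<and>
     exact_at (car (kM0 M)) (a20 M) (car (kM2 M)) (a12 M) \<and>
     exact_at (car (kM2 M)) (a12 M) (car (kM1 M)) (a01 M) \<and>
     exact_at (car (kM1 M)) (a01 M) (car (kM0 M)) (a20 M)"

definition ksubmodule :: "'a::ab_group_add kmod \<Rightarrow> 'a kmod \<Rightarrow> bool" where
  "ksubmodule N M \<longleftrightarrow>
     graded_subgroup (kM0 N) (kM0 M) \<and> graded_subgroup (kM1 N) (kM1 M) \<and>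
     graded_subgroup (kM2 N) (kM2 M) \<and>
     a01 N = a01 M \<and> a10 N = a10 M \<and> a12 N = a12 M \<and>
     a21 N = a21 M \<and> a02 N = a02 M \<and> a20 N = a20 M \<and>
     a01 M ` car (kM1 N) \<subseteq> car (kM0 N) \<and> a10 M ` car (kM0 N) \<subseteq> car (kM1 N) \<and>
     a12 M ` car (kM2 N) \<subseteq> car (kM1 N) \<and> a21 M ` car (kM1 N) \<subseteq> car (kM2 N) \<and>
     a02 M ` car (kM2 N) \<subseteq> car (kM0 N) \<and> a20 M ` car (kM0 N) \<subseteq> car (kM2 N)"

definition kuniq_pdiv :: "nat \<Rightarrow> 'a::ab_group_add kmod \<Rightarrow> bool" where
  "kuniq_pdiv p M \<longleftrightarrow> uniq_pdiv p (kM0 M) \<and> uniq_pdiv p (kM1 M) \<and> uniq_pdiv p (kM2 M)"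

(* Exactness at B/B' of the induced sequence  A/A' --f--> B/B' --g--> C/C'.
   Via the correspondence theorem, image = kernel in B/B' is equivalent to
   equality of their preimages in B:  f(A) + B' = g^{-1}(C') \<inter> B. *)
definition quot_exact_at :: "'a set \<Rightarrow> ('a \<Rightarrow> 'a) \<Rightarrow> 'a::ab_group_add set \<Rightarrow> 'a set \<Rightarrow> ('a \<Rightarrow> 'a) \<Rightarrow> 'a set \<Rightarrow> bool" where
  "quot_exact_at A f B B' g C' \<longleftrightarrow>
     {f a + b | a b. a \<in> A \<and> b \<in> B'} = {x \<in> B. g x \<in> C'}"

definition kquot_exact :: "'a::ab_group_add kmod \<Rightarrow> 'a kmod \<Rightarrow> bool" where
  "kquot_exact M N \<longleftrightarrow>
     quot_exact_at (car (kM0 M)) (a10 M) (car (kM1 M)) (car (kM1 N)) (a21 M) (car (kM2 N)) \<and>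
     quot_exact_at (car (kM1 M)) (a21 M) (car (kM2 M)) (car (kM2 N)) (a02 M) (car (kM0 N)) \<and>
     quot_exact_at (car (kM2 M)) (a02 M) (car (kM0 M)) (car (kM0 N)) (a10 M) (car (kM1 N)) \<and>
     quot_exact_at (car (kM0 M)) (a20 M) (car (kM2 M)) (car (kM2 N)) (a12 M) (car (kM1 N)) \<and>
     quot_exact_at (car (kM2 M)) (a12 M) (car (kM1 M)) (car (kM1 N)) (a01 M) (car (kM0 N)) \<and>
     quot_exact_at (car (kM1 M)) (a01 M) (car (kM0 M)) (car (kM0 N)) (a20 M) (car (kM2 N))"

definition gbij :: "(bool \<Rightarrow> 'a::ab_group_add set) \<Rightarrow> (bool \<Rightarrow> 'b::ab_group_add set) \<Rightarrow> ('a \<Rightarrow> 'b) \<Rightarrow> bool" where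
  "gbij G H f \<longleftrightarrow> bij_betw f (car G) (car H) \<and> (\<forall>d. f ` G d = H d) \<and>
     (\<forall>x\<in>car G. \<forall>y\<in>car G. f (x + y) = f x + f y)"

definition kiso :: "'a::ab_group_add kmod \<Rightarrow> 'b::ab_group_add kmod \<Rightarrow> ('a \<Rightarrow> 'b) \<Rightarrow> ('a \<Rightarrow> 'b) \<Rightarrow> ('a \<Rightarrow> 'b) \<Rightarrow> bool" where
  "kiso M N f0 f1 f2 \<longleftrightarrow>
     gbij (kM0 M) (kM0 N) f0 \<and> gbij (kM1 M) (kM1 N) f1 \<and> gbij (kM2 M) (kM2 N) f2 \<and>
     (\<forall>x\<in>car (kM1 M). f0 (a01 M x) = a01 N (f1 x)) \<and>
     (\<forall>x\<in>car (kM0 M). f1 (a10 M x) = a10 N (f0 x)) \<and>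
     (\<forall>x\<in>car (kM2 M). f1 (a12 M x) = a12 N (f2 x)) \<and>
     (\<forall>x\<in>car (kM1 M). f2 (a21 M x) = a21 N (f1 x)) \<and>
     (\<forall>x\<in>car (kM2 M). f0 (a02 M x) = a02 N (f2 x)) \<and>
     (\<forall>x\<in>car (kM0 M). f2 (a20 M x) = a20 N (f0 x))"

(* Z/2-graded Z[1/p]-module: graded group on which p is invertible *)
definition Zp_module :: "nat \<Rightarrow> (bool \<Rightarrow> 'a::ab_group_add set) \<Rightarrow> bool" where
  "Zp_module p X \<longleftrightarrow> graded_group X \<and> uniq_pdiv p X"

(* Z/2-graded Z[\<vartheta>,1/p]-module: Z[\<vartheta>] = Z[x]/(N(x)) for p prime, so the
   structure is a grading-preserving endomorphism th (action of \<vartheta>) with N(th) = 0,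
   on a graded group on which p is invertible *)
definition Zth_module :: "nat \<Rightarrow> (bool \<Rightarrow> 'a::ab_group_add set) \<Rightarrow> ('a \<Rightarrow> 'a) \<Rightarrow> bool" where
  "Zth_module p Y th \<longleftrightarrow> graded_group Y \<and> uniq_pdiv p Y \<and> ghom False Y Y th \<and>
     (\<forall>y\<in>car Y. Nop p th y = 0)"

definition Emod :: "nat \<Rightarrow> (bool \<Rightarrow> 'a::ab_group_add set) \<Rightarrow> (bool \<Rightarrow> 'a set) \<Rightarrow> ('a \<Rightarrow> 'a)
                    \<Rightarrow> (bool \<Rightarrow> 'a set) \<Rightarrow> ('a \<Rightarrow> 'a) \<Rightarrow> ('a \<times> 'a) kmod" where
  "Emod p X Y thY Z thZ =
     \<lparr> kM0 = (\<lambda>d. X d \<times> Y d),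
       kM1 = (\<lambda>d. X d \<times> Z d),
       kM2 = (\<lambda>d. Y d \<times> Z (\<not> d)),
       a01 = (\<lambda>(x, z). (x, 0)),
       a10 = (\<lambda>(x, y). (nmul p x, 0)),
       a12 = (\<lambda>(y, z). (0, z - thZ z)),
       a21 = (\<lambda>(x, z). (0, z)),
       a02 = (\<lambda>(y, z). (0, y - thY y)),
       a20 = (\<lambda>(x, y). (y, 0)) \<rparr>"

end

theory Submission
  imports Defs
begin

text \<open>Write \<open>T = \<alpha>\<^sub>1\<^sub>2 \<alpha>\<^sub>2\<^sub>1\<close> on \<open>M\<^sub>1\<close>, so \<open>s\<^sub>1 = 1 - T\<close> and \<open>K := \<alpha>\<^sub>1\<^sub>0 \<alpha>\<^sub>0\<^sub>1 = N(1 - T)\<close>. The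
  subgroup \<open>N = M'\<^sub>1\<close> is stable under \<open>T\<close> and \<open>K\<close>, and \<open>\<alpha>\<^sub>0\<^sub>1 K = p \<alpha>\<^sub>0\<^sub>1\<close>. Dividing by \<open>p\<close> inside \<open>N\<close>,
  together with the divisibility of \<open>p - N(1 - T)\<close> by \<open>T\<close> and the relation \<open>N(t\<^sub>2) + N(s\<^sub>2) = p\<close>,
  shows: on \<open>N\<close>, \<open>ker \<alpha>\<^sub>2\<^sub>1 = K(N)\<close> and \<open>ker \<alpha>\<^sub>0\<^sub>1 = T(N)\<close>, and \<open>\<alpha>\<^sub>1\<^sub>0\<close>, \<open>\<alpha>\<^sub>1\<^sub>2\<close> are injective on
  \<open>\<alpha>\<^sub>0\<^sub>1(N)\<close>, \<open>\<alpha>\<^sub>2\<^sub>1(N)\<close>. These four facts are the exactness of \<open>M'\<close>; they make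
  \<open>x \<mapsto> (\<alpha>\<^sub>0\<^sub>1 x, \<alpha>\<^sub>2\<^sub>1 x)\<close> an isomorphism \<open>N \<cong> \<alpha>\<^sub>0\<^sub>1(N) \<times> \<alpha>\<^sub>2\<^sub>1(N)\<close>, exhibiting \<open>M'\<close> as
  \<open>E(M'\<^sub>0, 0, M'\<^sub>2)\<close> with \<open>\<vartheta>\<close> acting as \<open>s\<^sub>2\<close>; and they reduce exactness of \<open>M/M'\<close> to that of \<open>M\<close>.\<close>

section \<open>Subgroups and additive maps\<close>

definition additive_on :: "'a::ab_group_add set \<Rightarrow> ('a \<Rightarrow> 'b::ab_group_add) \<Rightarrow> bool" where
  "additive_on S f \<longleftrightarrow> (\<forall>x\<in>S. \<forall>y\<in>S. f (x + y) = f x + f y)"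

lemma subgrp_zero: "subgrp S \<Longrightarrow> 0 \<in> S"
  unfolding subgrp_def by blast

lemma subgrp_add: "subgrp S \<Longrightarrow> x \<in> S \<Longrightarrow> y \<in> S \<Longrightarrow> x + y \<in> S"
  unfolding subgrp_def by blast

lemma subgrp_uminus: "subgrp S \<Longrightarrow> x \<in> S \<Longrightarrow> - x \<in> S"
  unfolding subgrp_def by blast

lemma subgrp_diff: "subgrp S \<Longrightarrow> x \<in> S \<Longrightarrow> y \<in> S \<Longrightarrow> x - y \<in> S"
  unfolding subgrp_def by (metis diff_conv_add_uminus)

lemma subgrp_sum:
  assumes "subgrp S" "finite A" "\<And>i. i \<in> A \<Longrightarrow> g i \<in> S"
  shows "sum g A \<in> S"
  using assms(2,3) by (induction A rule: finite_induct) (auto intro: subgrp_add subgrp_zero assms(1))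

lemma subgrp_singleton_zero: "subgrp {0}"
  unfolding subgrp_def by simp

lemma nmul_zero [simp]: "nmul n 0 = 0"
  unfolding nmul_def by simp

lemma nmul_diff: "nmul n (x - y) = nmul n x - nmul n y"
  unfolding nmul_def by (simp add: sum_subtractf)

lemma additive_on_subset: "additive_on S f \<Longrightarrow> A \<subseteq> S \<Longrightarrow> additive_on A f"
  unfolding additive_on_def by blast

lemma additive_onD: "additive_on S f \<Longrightarrow> x \<in> S \<Longrightarrow> y \<in> S \<Longrightarrow> f (x + y) = f x + f y"
  unfolding additive_on_def by blast

lemma additive_on_zero: "subgrp S \<Longrightarrow> additive_on S f \<Longrightarrow> f 0 = 0"
  by (metis add_0 add_cancel_right_right additive_onD subgrp_zero)

lemma additive_on_diff:
  assumes "subgrp S" "additive_on S f" "x \<in> S" "y \<in> S"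
  shows "f (x - y) = f x - f y"
proof -
  have "f x = f (x - y) + f y"
    using additive_onD[OF assms(2) subgrp_diff[OF assms(1,3,4)] assms(4)] by simp
  then show ?thesis
    by (simp add: algebra_simps)
qed

lemma additive_on_sum:
  assumes "subgrp S" "additive_on S f" "finite A" "\<And>i. i \<in> A \<Longrightarrow> g i \<in> S"
  shows "f (sum g A) = (\<Sum>i\<in>A. f (g i))"
  using assms(3,4)
proof (induction A rule: finite_induct)
  case empty
  then show ?case
    using additive_on_zero[OF assms(1,2)] by simp
next
  case (insert a A)
  then have "sum g A \<in> S"
    using subgrp_sum[OF assms(1)] by blast
  with insert show ?case
    by (simp add: additive_onD[OF assms(2)])
qed

lemma additive_on_nmul: "subgrp S \<Longrightarrow> additive_on S f \<Longrightarrow> x \<in> S \<Longrightarrow> f (nmul n x) = nmul n (f x)"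
  unfolding nmul_def by (simp add: additive_on_sum)

lemma additive_on_image_subgrp:
  assumes "subgrp S" "additive_on S f" "subgrp A" "A \<subseteq> S"
  shows "subgrp (f ` A)"
  unfolding subgrp_def
proof (intro conjI ballI)
  show "0 \<in> f ` A"
    using additive_on_zero[OF assms(1,2)] subgrp_zero[OF assms(3)] by (metis image_eqI)
next
  fix u v assume "u \<in> f ` A" "v \<in> f ` A"
  then obtain x y where "x \<in> A" "y \<in> A" "u = f x" "v = f y"
    by blast
  moreover have "x \<in> S" "y \<in> S"
    using \<open>x \<in> A\<close> \<open>y \<in> A\<close> assms(4) by blast+
  ultimately have "u + v = f (x + y)" "x + y \<in> A"
    using additive_onD[OF assms(2)] subgrp_add[OF assms(3)] by simp_all
  then show "u + v \<in> f ` A"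
    by blast
next
  fix u assume "u \<in> f ` A"
  then obtain x where x: "x \<in> A" "u = f x"
    by blast
  then have "f (0 - x) = f 0 - f x"
    using assms(4) additive_on_diff[OF assms(1,2) subgrp_zero[OF assms(1)]] by blast
  then have "- u = f (0 - x)"
    using x additive_on_zero[OF assms(1,2)] by simp
  moreover have "0 - x \<in> A"
    using x assms(3) subgrp_zero subgrp_diff by blast
  ultimately show "- u \<in> f ` A"
    by blast
qed

lemma funpow_closed: "(\<And>x. x \<in> S \<Longrightarrow> f x \<in> S) \<Longrightarrow> x \<in> S \<Longrightarrow> (f ^^ i) x \<in> S"
  by (induction i) auto

lemma Nop_closed: "subgrp S \<Longrightarrow> (\<And>x. x \<in> S \<Longrightarrow> f x \<in> S) \<Longrightarrow> x \<in> S \<Longrightarrow> Nop p f x \<in> S"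
  unfolding Nop_def by (rule subgrp_sum) (auto intro: funpow_closed)

lemma Nop_fixed_point: "f x = x \<Longrightarrow> Nop p f x = nmul p x"
proof -
  assume "f x = x"
  then have "(f ^^ i) x = x" for i
    by (induction i) auto
  then show ?thesis
    unfolding Nop_def nmul_def by simp
qed

lemma Nop_invariant:
  assumes "subgrp S" "additive_on S g" "\<And>x. x \<in> S \<Longrightarrow> f x \<in> S"
    and "\<And>x. x \<in> S \<Longrightarrow> g (f x) = g x" "x \<in> S"
  shows "g (Nop p f x) = nmul p (g x)"
proof -
  have "g ((f ^^ i) x) = g x" for i
  proof (induction i)
    case (Suc i)
    then show ?case
      using assms(4)[OF funpow_closed[of S f, OF assms(3) assms(5)]] by simp
  qed simp
  moreover have "g (Nop p f x) = (\<Sum>i<p. g ((f ^^ i) x))"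
    unfolding Nop_def by (rule additive_on_sum[OF assms(1,2)]) (auto intro: funpow_closed assms)
  ultimately show ?thesis
    unfolding nmul_def by simp
qed

text \<open>The polynomial \<open>n - N(1 - x)\<close> vanishes at \<open>x = 0\<close>; its quotient by \<open>x\<close> is
  \<open>\<Sum>i<n. \<Sum>j<i. (1 - x)\<^sup>j\<close>.\<close>

lemma nmul_diff_Nop_in_image:
  assumes "subgrp S" "additive_on S T" "\<And>x. x \<in> S \<Longrightarrow> T x \<in> S" "w \<in> S"
  shows "nmul n w - Nop n (\<lambda>y. y - T y) w \<in> T ` S"
proof -
  let ?s = "\<lambda>y. y - T y"
  have s_closed: "\<And>x. x \<in> S \<Longrightarrow> ?s x \<in> S"
    using assms(1,3) subgrp_diff by blast
  have orbit: "(?s ^^ j) w \<in> S" for j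
    using funpow_closed[OF s_closed assms(4)] .
  have partial_sum: "(\<Sum>j<i. (?s ^^ j) w) \<in> S" for i
    by (rule subgrp_sum[OF assms(1)]) (auto intro: orbit)
  have telescope: "T (\<Sum>j<i. (?s ^^ j) w) = w - (?s ^^ i) w" for i
  proof (induction i)
    case 0
    show ?case
      using additive_on_zero[OF assms(1,2)] by simp
  next
    case (Suc i)
    have "T (\<Sum>j<Suc i. (?s ^^ j) w) = T (\<Sum>j<i. (?s ^^ j) w) + T ((?s ^^ i) w)"
      using additive_onD[OF assms(2) partial_sum orbit] by simp
    also have "\<dots> = w - (?s ^^ Suc i) w"
      unfolding Suc.IH by simp
    finally show ?case .
  qed
  have "T (\<Sum>i<n. \<Sum>j<i. (?s ^^ j) w) = (\<Sum>i<n. T (\<Sum>j<i. (?s ^^ j) w))"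
    by (rule additive_on_sum[OF assms(1,2)]) (auto intro: partial_sum)
  also have "\<dots> = nmul n w - Nop n ?s w"
    unfolding telescope nmul_def Nop_def by (rule sum_subtractf)
  finally have "nmul n w - Nop n ?s w = T (\<Sum>i<n. \<Sum>j<i. (?s ^^ j) w)" ..
  moreover have "(\<Sum>i<n. \<Sum>j<i. (?s ^^ j) w) \<in> S"
    by (rule subgrp_sum[OF assms(1)]) (auto intro: partial_sum)
  ultimately show ?thesis
    by blast
qed

section \<open>Graded groups\<close>

lemma graded_group_piece_subgrp: "graded_group G \<Longrightarrow> subgrp (G d)"
  unfolding graded_group_def by blast

lemma graded_group_piece_subset_car:
  assumes "graded_group G"
  shows "G d \<subseteq> car G"
proof
  fix x assume "x \<in> G d"
  have "0 \<in> G False" "0 \<in> G True"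
    using assms graded_group_piece_subgrp subgrp_zero by blast+
  with \<open>x \<in> G d\<close> have "x = x + 0 \<and> x \<in> G False \<and> 0 \<in> G True \<or> x = 0 + x \<and> 0 \<in> G False \<and> x \<in> G True"
    by (cases d) simp_all
  then show "x \<in> car G"
    unfolding car_def by blast
qed

lemma graded_group_subgrp_car:
  assumes "graded_group G"
  shows "subgrp (car G)"
  unfolding subgrp_def
proof (intro conjI ballI)
  have pieces: "subgrp (G False)" "subgrp (G True)"
    using assms graded_group_piece_subgrp by blast+
  show "0 \<in> car G"
    using assms graded_group_piece_subset_car pieces(1) subgrp_zero by blast
  fix x y assume "x \<in> car G" "y \<in> car G"
  then obtain a b c e where "x = a + b" "y = c + e" "a \<in> G False" "b \<in> G True" "c \<in> G False" "e \<in> G True"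
    unfolding car_def by blast
  then have "x + y = (a + c) + (b + e)" "a + c \<in> G False" "b + e \<in> G True"
       and "- x = (- a) + (- b)" "- a \<in> G False" "- b \<in> G True"
    using pieces by (auto simp: algebra_simps intro: subgrp_add subgrp_uminus)
  then show "x + y \<in> car G" "- x \<in> car G"
    unfolding car_def by blast+
qed

lemma graded_group_flip: "graded_group G \<Longrightarrow> graded_group (\<lambda>d. G (\<not> d))"
  unfolding graded_group_def by auto

lemma car_flip: "car (\<lambda>d. G (\<not> d)) = car G"
  unfolding car_def by (auto simp: add.commute) (metis add.commute)+

lemma graded_subgroup_graded_group:
  assumes "graded_subgroup H G" "graded_group G"
  shows "graded_group H"
proof -
  have "H False \<inter> H True \<subseteq> {0}" "0 \<in> H False" "0 \<in> H True"
    using assms subgrp_zero unfolding graded_subgroup_def graded_group_def by blast+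
  then show ?thesis
    using assms(1) unfolding graded_subgroup_def graded_group_def by blast
qed

lemma graded_subgroup_flip: "graded_subgroup H G \<Longrightarrow> graded_subgroup (\<lambda>d. H (\<not> d)) (\<lambda>d. G (\<not> d))"
  unfolding graded_subgroup_def by blast

lemma graded_subgroup_car_subset: "graded_subgroup H G \<Longrightarrow> car H \<subseteq> car G"
  unfolding graded_subgroup_def car_def by blast

lemma graded_subgroup_homogeneous:
  assumes "graded_subgroup H G" "graded_group G" "x \<in> car H" "x \<in> G d"
  shows "x \<in> H d"
proof -
  obtain u v where uv: "x = u + v" "u \<in> H False" "v \<in> H True"
    using assms(3) unfolding car_def by blast
  have u: "u \<in> G False" and v: "v \<in> G True"
    using uv assms(1) unfolding graded_subgroup_def by blast+
  have G_pieces: "subgrp (G False)" "subgrp (G True)" "G False \<inter> G True = {0}"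
    using assms(2) unfolding graded_group_def by blast+
  show ?thesis
  proof (cases d)
    case True
    then have "u \<in> G True"
      using subgrp_diff[OF G_pieces(2) _ v, of x] assms(4) uv(1) by simp
    then have "u = 0"
      using u G_pieces(3) by blast
    then show ?thesis
      using uv True by simp
  next
    case False
    then have "v \<in> G False"
      using subgrp_diff[OF G_pieces(1) _ u, of x] assms(4) uv(1) by simp
    then have "v = 0"
      using v G_pieces(3) by blast
    then show ?thesis
      using uv False by simp
  qed
qed

lemma ghom_additive_on: "ghom fl G H f \<Longrightarrow> additive_on (car G) f"
  unfolding ghom_def additive_on_def by blast

lemma ghom_car_closed:
  assumes "graded_group G" "graded_group H" "ghom fl G H f" "x \<in> car G"
  shows "f x \<in> car H"
proof -
  obtain u v where uv: "x = u + v" "u \<in> G False" "v \<in> G True"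
    using assms(4) unfolding car_def by blast
  have "u \<in> car G" "v \<in> car G"
    using uv graded_group_piece_subset_car[OF assms(1)] by blast+
  then have "f x = f u + f v"
    using uv(1) additive_onD[OF ghom_additive_on[OF assms(3)]] by simp
  moreover have "f u \<in> H (False \<noteq> fl)" "f v \<in> H (True \<noteq> fl)"
    using uv assms(3) unfolding ghom_def by blast+
  then have "f u \<in> car H" "f v \<in> car H"
    using graded_group_piece_subset_car[OF assms(2)] by blast+
  ultimately show ?thesis
    using subgrp_add[OF graded_group_subgrp_car[OF assms(2)]] by simp
qed

lemma car_image:
  assumes "graded_group G" "additive_on (car G) f"
  shows "car (\<lambda>d. f ` G d) = f ` car G"
proof
  have sum: "f a + f b = f (a + b)" if "a \<in> G False" "b \<in> G True" for a b
  proof -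
    have "a \<in> car G" "b \<in> car G"
      using that graded_group_piece_subset_car[OF assms(1)] by blast+
    then show ?thesis
      using additive_onD[OF assms(2)] by simp
  qed
  show "car (\<lambda>d. f ` G d) \<subseteq> f ` car G"
  proof
    fix z assume "z \<in> car (\<lambda>d. f ` G d)"
    then obtain a b where ab: "z = f a + f b" "a \<in> G False" "b \<in> G True"
      unfolding car_def by blast
    then have "z = f (a + b)"
      using sum by simp
    moreover have "a + b \<in> car G"
      using ab(2,3) unfolding car_def by blast
    ultimately show "z \<in> f ` car G"
      by blast
  qed
  show "f ` car G \<subseteq> car (\<lambda>d. f ` G d)"
  proof
    fix z assume "z \<in> f ` car G"
    then obtain a b where ab: "z = f (a + b)" "a \<in> G False" "b \<in> G True"
      unfolding car_def by blast
    then have "z = f a + f b" "f a \<in> f ` G False" "f b \<in> f ` G True"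
      using sum by simp_all
    then show "z \<in> car (\<lambda>d. f ` G d)"
      unfolding car_def by blast
  qed
qed

lemma image_graded_subgroup:
  assumes "graded_group G" "graded_group H" "ghom fl G H f" "graded_subgroup A G"
  shows "graded_group (\<lambda>d. f ` A d)" "graded_subgroup (\<lambda>d. f ` A d) (\<lambda>d. H (d \<noteq> fl))"
proof -
  have image_sub: "f ` A d \<subseteq> H (d \<noteq> fl)" for d
    using assms(3,4) unfolding ghom_def graded_subgroup_def by blast
  have image_subgrp: "subgrp (f ` A d)" for d
  proof (rule additive_on_image_subgrp)
    show "subgrp (car G)" "additive_on (car G) f"
      using assms(1,3) graded_group_subgrp_car ghom_additive_on by blast+
    show "subgrp (A d)" "A d \<subseteq> car G"
      using assms(1,4) graded_group_piece_subset_car unfolding graded_subgroup_def by blast+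
  qed
  have "f ` A False \<inter> f ` A True \<subseteq> H False \<inter> H True"
    using image_sub[of False] image_sub[of True] by (cases fl) auto
  moreover have "0 \<in> f ` A False" "0 \<in> f ` A True" "H False \<inter> H True = {0}"
    using image_subgrp subgrp_zero assms(2) unfolding graded_group_def by blast+
  ultimately show "graded_group (\<lambda>d. f ` A d)"
    unfolding graded_group_def using image_subgrp by blast
  show "graded_subgroup (\<lambda>d. f ` A d) (\<lambda>d. H (d \<noteq> fl))"
    unfolding graded_subgroup_def using image_subgrp image_sub by blast
qed

lemma gbijI:
  assumes "graded_group G" "\<And>d. f ` G d = H d" "additive_on (car G) f"
    and "\<And>x. x \<in> car G \<Longrightarrow> f x = 0 \<Longrightarrow> x = 0"
  shows "gbij G H f"
proof -
  have subgrp: "subgrp (car G)"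
    using graded_group_subgrp_car assms(1) .
  have "inj_on f (car G)"
  proof (rule inj_onI)
    fix x y assume "x \<in> car G" "y \<in> car G" "f x = f y"
    then have "f (x - y) = 0" "x - y \<in> car G"
      using additive_on_diff[OF subgrp assms(3)] subgrp_diff[OF subgrp] by simp_all
    then show "x = y"
      using assms(4) by fastforce
  qed
  moreover have "f ` car G = car H"
    using car_image[OF assms(1,3)] assms(2) by simp
  ultimately show ?thesis
    unfolding gbij_def bij_betw_def using assms(2,3) unfolding additive_on_def by blast
qed

lemma ghom_restrict:
  assumes "ghom fl G H f" "graded_group G" "graded_group H"
    and "graded_subgroup G' G" "graded_subgroup H' H" "f ` car G' \<subseteq> car H'"
  shows "ghom fl G' H' f"
  unfolding ghom_def
proof (intro conjI allI ballI)
  fix d x assume "x \<in> G' d"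
  then have "x \<in> car G'" "x \<in> G d"
    using assms(2,4) graded_subgroup_graded_group graded_group_piece_subset_car
    unfolding graded_subgroup_def by blast+
  then show "f x \<in> H' (d \<noteq> fl)"
    using assms(1,6) graded_subgroup_homogeneous[OF assms(5,3)] unfolding ghom_def by blast
next
  fix x y assume "x \<in> car G'" "y \<in> car G'"
  then show "f (x + y) = f x + f y"
    using assms(1,4) graded_subgroup_car_subset additive_onD[OF ghom_additive_on] by blast
qed

lemma car_split:
  assumes "x \<in> car G"
  obtains c c' where "x = c + c'" "c \<in> G d" "c' \<in> G (\<not> d)"
proof -
  obtain u v where "x = u + v" "u \<in> G False" "v \<in> G True"
    using assms unfolding car_def by blast
  then show ?thesis
    using that[of u v] that[of v u] by (cases d) (simp_all add: add.commute)
qed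

lemma uniq_pdiv_torsion_free:
  assumes "uniq_pdiv p G" "graded_group G" "x \<in> car G" "nmul p x = 0"
  shows "x = 0"
proof -
  have "0 \<in> car G"
    using assms(2) graded_group_subgrp_car subgrp_zero by blast
  then show ?thesis
    using assms unfolding uniq_pdiv_def bij_betw_def inj_on_def by (metis nmul_zero)
qed

lemma uniq_pdiv_divide: "uniq_pdiv p G \<Longrightarrow> u \<in> car G \<Longrightarrow> \<exists>w\<in>car G. nmul p w = u"
  unfolding uniq_pdiv_def bij_betw_def by (metis imageE)

lemma bij_nmul_image:
  assumes "subgrp S" "additive_on S f" "bij_betw (nmul p) S S"
    and "\<And>y. y \<in> f ` S \<Longrightarrow> nmul p y = 0 \<Longrightarrow> y = 0"
  shows "bij_betw (nmul p) (f ` S) (f ` S)"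
proof -
  have commute: "f (nmul p x) = nmul p (f x)" if "x \<in> S" for x
    using additive_on_nmul[OF assms(1,2) that] .
  have image_subgrp: "subgrp (f ` S)"
    using additive_on_image_subgrp[OF assms(1,2,1)] by blast
  have "inj_on (nmul p) (f ` S)"
  proof (rule inj_onI)
    fix x y assume "x \<in> f ` S" "y \<in> f ` S" "nmul p x = nmul p y"
    then show "x = y"
      using assms(4)[of "x - y"] subgrp_diff[OF image_subgrp] by (simp add: nmul_diff)
  qed
  moreover have "nmul p ` f ` S = f ` nmul p ` S"
    unfolding image_image by (rule image_cong) (simp_all add: commute)
  then have "nmul p ` f ` S = f ` S"
    using assms(3) unfolding bij_betw_def by simp
  ultimately show ?thesis
    unfolding bij_betw_def by blast
qed

lemma Zth_module_zero: "Zth_module p (\<lambda>_. {0}) (\<lambda>_. 0)"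
proof -
  have "car (\<lambda>_. {0::'a}) = {0}"
    unfolding car_def by auto
  moreover have "((\<lambda>_::'a. 0::'a) ^^ i) 0 = 0" for i
    by (induction i) simp_all
  then have "Nop p (\<lambda>_::'a. 0::'a) 0 = 0"
    unfolding Nop_def by simp
  ultimately show ?thesis
    unfolding Zth_module_def graded_group_def uniq_pdiv_def ghom_def
    by (simp add: subgrp_singleton_zero bij_betw_def)
qed

lemma quot_exact_atI:
  assumes "exact_at A f B g" "subgrp B" "additive_on B g" "B' \<subseteq> B"
    and "\<And>x. x \<in> B \<Longrightarrow> g x \<in> C' \<longleftrightarrow> (\<exists>b\<in>B'. g x = g b)"
  shows "quot_exact_at A f B B' g C'"
  unfolding quot_exact_at_def
proof (intro equalityI subsetI)
  fix x assume "x \<in> {f a + b |a b. a \<in> A \<and> b \<in> B'}"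
  then obtain a b where x: "x = f a + b" "a \<in> A" "b \<in> B'"
    by blast
  then have "f a \<in> B" "g (f a) = 0" "b \<in> B"
    using assms(1,4) unfolding exact_at_def by blast+
  then have "x \<in> B" "g x = g b"
    using x(1) subgrp_add[OF assms(2)] additive_onD[OF assms(3)] by simp_all
  then show "x \<in> {x \<in> B. g x \<in> C'}"
    using assms(5) x(3) by blast
next
  fix x assume "x \<in> {x \<in> B. g x \<in> C'}"
  then obtain b where b: "x \<in> B" "b \<in> B'" "g x = g b"
    using assms(5) by blast
  then have "x - b \<in> B" "g (x - b) = 0"
    using assms(4) subgrp_diff[OF assms(2)] additive_on_diff[OF assms(2,3)] by auto
  then obtain a where "a \<in> A" "x - b = f a"
    using assms(1) unfolding exact_at_def by blast
  then have "x = f a + b"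
    by (simp add: algebra_simps)
  then show "x \<in> {f a + b |a b. a \<in> A \<and> b \<in> B'}"
    using \<open>a \<in> A\<close> b(2) by blast
qed

section \<open>\<open>\<KK>\<close>-modules\<close>

locale K_module =
  fixes p :: nat and M :: "'a::ab_group_add kmod"
  assumes kmodule: "kmodule p M"
begin

abbreviation "M0 \<equiv> car (kM0 M)"
abbreviation "M1 \<equiv> car (kM1 M)"
abbreviation "M2 \<equiv> car (kM2 M)"

lemma graded: "graded_group (kM0 M)" "graded_group (kM1 M)" "graded_group (kM2 M)"
  using kmodule unfolding kmodule_def by auto

lemma ghoms:
  "ghom False (kM1 M) (kM0 M) (a01 M)" "ghom False (kM0 M) (kM1 M) (a10 M)"
  "ghom True (kM2 M) (kM1 M) (a12 M)" "ghom True (kM1 M) (kM2 M) (a21 M)"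
  "ghom False (kM2 M) (kM0 M) (a02 M)" "ghom False (kM0 M) (kM2 M) (a20 M)"
  using kmodule unfolding kmodule_def by auto

lemma compositions_zero:
  "x \<in> M2 \<Longrightarrow> a01 M (a12 M x) = 0"
  "x \<in> M1 \<Longrightarrow> a02 M (a21 M x) = 0"
  "x \<in> M2 \<Longrightarrow> a10 M (a02 M x) = 0"
  "x \<in> M0 \<Longrightarrow> a12 M (a20 M x) = 0"
  "x \<in> M1 \<Longrightarrow> a20 M (a01 M x) = 0"
  "x \<in> M0 \<Longrightarrow> a21 M (a10 M x) = 0"
  using kmodule unfolding kmodule_def by auto

lemma a01_a10: "x \<in> M0 \<Longrightarrow> a01 M (a10 M x) = Nop p (\<lambda>y. y - a02 M (a20 M y)) x"
  using kmodule unfolding kmodule_def by auto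

lemma a10_a01: "x \<in> M1 \<Longrightarrow> a10 M (a01 M x) = Nop p (\<lambda>y. y - a12 M (a21 M y)) x"
  using kmodule unfolding kmodule_def by auto

lemma Nop_t2_add_Nop_s2:
  "x \<in> M2 \<Longrightarrow> Nop p (\<lambda>y. y - a20 M (a02 M y)) x + Nop p (\<lambda>y. y - a21 M (a12 M y)) x = nmul p x"
  using kmodule unfolding kmodule_def by auto

lemma subgrps: "subgrp M0" "subgrp M1" "subgrp M2"
  using graded graded_group_subgrp_car by auto

lemma maps_closed:
  "x \<in> M1 \<Longrightarrow> a01 M x \<in> M0" "x \<in> M0 \<Longrightarrow> a10 M x \<in> M1"
  "x \<in> M2 \<Longrightarrow> a12 M x \<in> M1" "x \<in> M1 \<Longrightarrow> a21 M x \<in> M2"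
  "x \<in> M2 \<Longrightarrow> a02 M x \<in> M0" "x \<in> M0 \<Longrightarrow> a20 M x \<in> M2"
  using ghom_car_closed[OF graded(2) graded(1) ghoms(1)] ghom_car_closed[OF graded(1) graded(2) ghoms(2)]
    ghom_car_closed[OF graded(3) graded(2) ghoms(3)] ghom_car_closed[OF graded(2) graded(3) ghoms(4)]
    ghom_car_closed[OF graded(3) graded(1) ghoms(5)] ghom_car_closed[OF graded(1) graded(3) ghoms(6)]
  by auto

lemma maps_additive:
  "additive_on M1 (a01 M)" "additive_on M0 (a10 M)" "additive_on M2 (a12 M)"
  "additive_on M1 (a21 M)" "additive_on M2 (a02 M)" "additive_on M0 (a20 M)"
  using ghoms ghom_additive_on by auto

lemma maps_zero [simp]:
  "a01 M 0 = 0" "a10 M 0 = 0" "a12 M 0 = 0" "a21 M 0 = 0" "a02 M 0 = 0" "a20 M 0 = 0"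
  using maps_additive subgrps additive_on_zero by metis+

lemma maps_add:
  "x \<in> M1 \<Longrightarrow> y \<in> M1 \<Longrightarrow> a01 M (x + y) = a01 M x + a01 M y"
  "x \<in> M0 \<Longrightarrow> y \<in> M0 \<Longrightarrow> a10 M (x + y) = a10 M x + a10 M y"
  "x \<in> M2 \<Longrightarrow> y \<in> M2 \<Longrightarrow> a12 M (x + y) = a12 M x + a12 M y"
  "x \<in> M1 \<Longrightarrow> y \<in> M1 \<Longrightarrow> a21 M (x + y) = a21 M x + a21 M y"
  "x \<in> M2 \<Longrightarrow> y \<in> M2 \<Longrightarrow> a02 M (x + y) = a02 M x + a02 M y"
  "x \<in> M0 \<Longrightarrow> y \<in> M0 \<Longrightarrow> a20 M (x + y) = a20 M x + a20 M y"
  using maps_additive additive_onD by metis+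

lemma maps_diff:
  "x \<in> M1 \<Longrightarrow> y \<in> M1 \<Longrightarrow> a01 M (x - y) = a01 M x - a01 M y"
  "x \<in> M0 \<Longrightarrow> y \<in> M0 \<Longrightarrow> a10 M (x - y) = a10 M x - a10 M y"
  "x \<in> M2 \<Longrightarrow> y \<in> M2 \<Longrightarrow> a12 M (x - y) = a12 M x - a12 M y"
  "x \<in> M1 \<Longrightarrow> y \<in> M1 \<Longrightarrow> a21 M (x - y) = a21 M x - a21 M y"
  "x \<in> M2 \<Longrightarrow> y \<in> M2 \<Longrightarrow> a02 M (x - y) = a02 M x - a02 M y"
  "x \<in> M0 \<Longrightarrow> y \<in> M0 \<Longrightarrow> a20 M (x - y) = a20 M x - a20 M y"
  using maps_additive subgrps additive_on_diff by metis+

lemma maps_nmul: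
  "x \<in> M1 \<Longrightarrow> a01 M (nmul n x) = nmul n (a01 M x)"
  "x \<in> M0 \<Longrightarrow> a10 M (nmul n x) = nmul n (a10 M x)"
  "x \<in> M2 \<Longrightarrow> a12 M (nmul n x) = nmul n (a12 M x)"
  "x \<in> M1 \<Longrightarrow> a21 M (nmul n x) = nmul n (a21 M x)"
  "x \<in> M2 \<Longrightarrow> a02 M (nmul n x) = nmul n (a02 M x)"
  "x \<in> M0 \<Longrightarrow> a20 M (nmul n x) = nmul n (a20 M x)"
  using maps_additive subgrps additive_on_nmul by metis+

lemma maps_homogeneous:
  "x \<in> kM1 M d \<Longrightarrow> a01 M x \<in> kM0 M d"
  "x \<in> kM1 M d \<Longrightarrow> a21 M x \<in> kM2 M (\<not> d)"
  "x \<in> kM2 M d \<Longrightarrow> a12 M x \<in> kM1 M (\<not> d)"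
  using ghoms unfolding ghom_def by force+

abbreviation T :: "'a \<Rightarrow> 'a" where "T x \<equiv> a12 M (a21 M x)"
abbreviation s :: "'a \<Rightarrow> 'a" where "s \<equiv> \<lambda>y. y - T y"

lemma T_closed: "x \<in> M1 \<Longrightarrow> T x \<in> M1"
  using maps_closed(3,4) .

lemma T_additive: "additive_on M1 T"
  unfolding additive_on_def using maps_add(3,4) maps_closed(4) by simp

lemma a01_s: "x \<in> M1 \<Longrightarrow> a01 M (s x) = a01 M x"
  using maps_diff(1) T_closed compositions_zero(1) maps_closed(4) by simp

lemma a01_a10_a01: "x \<in> M1 \<Longrightarrow> a01 M (a10 M (a01 M x)) = nmul p (a01 M x)"
  using Nop_invariant[OF subgrps(2) maps_additive(1), of s] a10_a01 a01_s
    subgrp_diff[OF subgrps(2)] T_closed by simp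

text \<open>If \<open>T x = 0\<close>, both \<open>s\<^sub>2\<close> and \<open>t\<^sub>2\<close> fix \<open>z = \<alpha>\<^sub>2\<^sub>1 x\<close>, so \<open>N(t\<^sub>2) + N(s\<^sub>2) = p\<close> reads
  \<open>p z + p z = p z\<close>.\<close>

lemma nmul_a21_eq_0_if_T_eq_0:
  assumes "x \<in> M1" "T x = 0"
  shows "nmul p (a21 M x) = 0"
proof -
  have "Nop p (\<lambda>y. y - a20 M (a02 M y)) (a21 M x) = nmul p (a21 M x)"
    by (rule Nop_fixed_point) (simp add: compositions_zero(2)[OF assms(1)])
  moreover have "Nop p (\<lambda>y. y - a21 M (a12 M y)) (a21 M x) = nmul p (a21 M x)"
    by (rule Nop_fixed_point) (simp add: assms(2))
  ultimately show ?thesis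
    using Nop_t2_add_Nop_s2[OF maps_closed(4)[OF assms(1)]] by simp
qed

end

lemma ksubmodule_kmodule:
  assumes "kmodule p M" "ksubmodule N M"
  shows "kmodule p N"
proof -
  interpret K_module p M
    by (rule K_module.intro) (rule assms(1))
  have sub: "graded_subgroup (kM0 N) (kM0 M)" "graded_subgroup (kM1 N) (kM1 M)"
      "graded_subgroup (kM2 N) (kM2 M)"
    and maps: "a01 N = a01 M" "a10 N = a10 M" "a12 N = a12 M"
      "a21 N = a21 M" "a02 N = a02 M" "a20 N = a20 M"
    and closed: "a01 M ` car (kM1 N) \<subseteq> car (kM0 N)" "a10 M ` car (kM0 N) \<subseteq> car (kM1 N)"
      "a12 M ` car (kM2 N) \<subseteq> car (kM1 N)" "a21 M ` car (kM1 N) \<subseteq> car (kM2 N)"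
      "a02 M ` car (kM2 N) \<subseteq> car (kM0 N)" "a20 M ` car (kM0 N) \<subseteq> car (kM2 N)"
    using assms(2) unfolding ksubmodule_def by simp_all
  have graded_N: "graded_group (kM0 N)" "graded_group (kM1 N)" "graded_group (kM2 N)"
    using graded_subgroup_graded_group sub graded by blast+
  have in_M: "x \<in> car (kM0 N) \<Longrightarrow> x \<in> M0" "x \<in> car (kM1 N) \<Longrightarrow> x \<in> M1"
      "x \<in> car (kM2 N) \<Longrightarrow> x \<in> M2" for x
    using graded_subgroup_car_subset sub by blast+
  show ?thesis
    unfolding kmodule_def maps
    using graded_N
      ghom_restrict[OF ghoms(1) graded(2,1) sub(2,1) closed(1)]
      ghom_restrict[OF ghoms(2) graded(1,2) sub(1,2) closed(2)]
      ghom_restrict[OF ghoms(3) graded(3,2) sub(3,2) closed(3)]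
      ghom_restrict[OF ghoms(4) graded(2,3) sub(2,3) closed(4)]
      ghom_restrict[OF ghoms(5) graded(3,1) sub(3,1) closed(5)]
      ghom_restrict[OF ghoms(6) graded(1,3) sub(1,3) closed(6)]
    by (simp add: in_M compositions_zero a01_a10 a10_a01 Nop_t2_add_Nop_s2)
qed

section \<open>The submodule generated by an \<open>s\<^sub>1\<close>-invariant uniquely \<open>p\<close>-divisible subgroup\<close>

locale s1_invariant_divisible_subgroup = K_module +
  fixes N1 :: "bool \<Rightarrow> 'a set"
  assumes graded_subgroup: "graded_subgroup N1 (kM1 M)"
    and s_invariant: "\<forall>x\<in>car N1. x - a12 M (a21 M x) \<in> car N1"
    and uniq_pdiv: "uniq_pdiv p N1"
begin

abbreviation "N \<equiv> car N1"

lemma N_graded: "graded_group N1"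
  using graded_subgroup_graded_group[OF graded_subgroup graded(2)] .

lemma N_subgrp: "subgrp N"
  using graded_group_subgrp_car[OF N_graded] .

lemma N_M1: "x \<in> N \<Longrightarrow> x \<in> M1"
  using graded_subgroup_car_subset[OF graded_subgroup] by blast

lemma N_pieces: "N1 d \<subseteq> kM1 M d" "subgrp (N1 d)" "N1 d \<subseteq> N"
  using graded_subgroup N_graded graded_group_piece_subset_car unfolding graded_subgroup_def by blast+

lemma N_torsion_free: "x \<in> N \<Longrightarrow> nmul p x = 0 \<Longrightarrow> x = 0"
  using uniq_pdiv_torsion_free[OF uniq_pdiv N_graded] .

lemma N_divide:
  assumes "u \<in> N"
  obtains w where "w \<in> N" "u = nmul p w"
  using uniq_pdiv_divide[OF uniq_pdiv assms] by metis

lemma s_closed: "x \<in> N \<Longrightarrow> s x \<in> N"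
  using s_invariant by blast

lemma T_closed_N:
  assumes "x \<in> N"
  shows "T x \<in> N"
  using subgrp_diff[OF N_subgrp assms s_closed[OF assms]] by simp

lemma a10_a01_closed: "x \<in> N \<Longrightarrow> a10 M (a01 M x) \<in> N"
  using Nop_closed[OF N_subgrp s_closed] a10_a01 N_M1 by simp

lemma T_nmul: "x \<in> M1 \<Longrightarrow> T (nmul n x) = nmul n (T x)"
  using maps_nmul(3,4) maps_closed(4) by simp

lemma a10_a01_nmul: "x \<in> M1 \<Longrightarrow> a10 M (a01 M (nmul n x)) = nmul n (a10 M (a01 M x))"
  using maps_nmul(1,2) maps_closed(1) by simp

lemma T_nmul_eq_0D: "w \<in> N \<Longrightarrow> T (nmul p w) = 0 \<Longrightarrow> T w = 0"
  using N_torsion_free[OF T_closed_N] T_nmul[OF N_M1] by simp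

lemma a10_a01_nmul_eq_0D: "w \<in> N \<Longrightarrow> a10 M (a01 M (nmul p w)) = 0 \<Longrightarrow> a10 M (a01 M w) = 0"
  using N_torsion_free[OF a10_a01_closed] a10_a01_nmul[OF N_M1] by simp

lemma nmul_diff_a10_a01_in_T_image:
  assumes "w \<in> N"
  shows "nmul p w - a10 M (a01 M w) \<in> T ` N"
proof -
  have "additive_on N T"
    using additive_on_subset[OF T_additive] N_M1 by blast
  moreover have "\<And>x. x \<in> N \<Longrightarrow> T x \<in> N"
    by (rule T_closed_N)
  ultimately have "nmul p w - Nop p s w \<in> T ` N"
    by (rule nmul_diff_Nop_in_image[OF N_subgrp _ _ assms])
  then show ?thesis
    using a10_a01[OF N_M1[OF assms]] by simp
qed

lemma ker_a21_on_N:
  assumes "x \<in> N" "a21 M x = 0"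
  shows "\<exists>w\<in>N. x = a10 M (a01 M w)"
proof -
  obtain w where w: "w \<in> N" "x = nmul p w"
    using N_divide[OF assms(1)] .
  then have "T w = 0"
    using T_nmul_eq_0D assms(2) by simp
  then have "a10 M (a01 M w) = x"
    using a10_a01[OF N_M1[OF w(1)]] Nop_fixed_point[of s w p] w(2) by simp
  then show ?thesis
    using w(1) by blast
qed

lemma ker_a01_on_N:
  assumes "x \<in> N" "a01 M x = 0"
  shows "\<exists>q\<in>N. x = T q"
proof -
  obtain w where w: "w \<in> N" "x = nmul p w"
    using N_divide[OF assms(1)] .
  then have "a10 M (a01 M w) = 0"
    using a10_a01_nmul_eq_0D assms(2) by simp
  then have "x = nmul p w - a10 M (a01 M w)"
    using w(2) by simp
  then show ?thesis
    using nmul_diff_a10_a01_in_T_image[OF w(1)] by blast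
qed

lemma ker_a10_on_a01_image:
  assumes "y \<in> a01 M ` N" "a10 M y = 0"
  shows "y = 0"
proof -
  obtain x where x: "x \<in> N" "y = a01 M x"
    using assms(1) by blast
  obtain w where w: "w \<in> N" "x = nmul p w"
    using N_divide[OF x(1)] .
  then have "a10 M (a01 M w) = 0"
    using a10_a01_nmul_eq_0D assms(2) x(2) by simp
  then have "nmul p (a01 M w) = 0"
    using a01_a10_a01[OF N_M1[OF w(1)]] by simp
  then show ?thesis
    using maps_nmul(1)[OF N_M1[OF w(1)]] w(2) x(2) by simp
qed

lemma ker_a12_on_a21_image:
  assumes "y \<in> a21 M ` N" "a12 M y = 0"
  shows "y = 0"
proof -
  obtain x where x: "x \<in> N" "y = a21 M x"
    using assms(1) by blast
  obtain w where w: "w \<in> N" "x = nmul p w"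
    using N_divide[OF x(1)] .
  then have "T w = 0"
    using T_nmul_eq_0D assms(2) x(2) by simp
  then have "nmul p (a21 M w) = 0"
    using nmul_a21_eq_0_if_T_eq_0[OF N_M1[OF w(1)]] by simp
  then show ?thesis
    using maps_nmul(4)[OF N_M1[OF w(1)]] w(2) x(2) by simp
qed

lemma a01_a21_eq_0_imp_eq_0:
  assumes "x \<in> N" "a01 M x = 0" "a21 M x = 0"
  shows "x = 0"
proof -
  have "nmul p x = a10 M (a01 M x)"
    using a10_a01[OF N_M1[OF assms(1)]] Nop_fixed_point[of s x p] assms(3) by simp
  then show ?thesis
    using N_torsion_free assms(1,2) by simp
qed

lemma a01_surj_with_a21_eq_0:
  assumes "u \<in> N"
  shows "\<exists>e\<in>N. a01 M e = a01 M u \<and> a21 M e = 0"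
proof -
  obtain w where w: "w \<in> N" "u = nmul p w"
    using N_divide[OF assms] .
  have "a01 M (a10 M (a01 M w)) = a01 M u"
    using a01_a10_a01[OF N_M1[OF w(1)]] maps_nmul(1)[OF N_M1[OF w(1)]] w(2) by simp
  moreover have "a21 M (a10 M (a01 M w)) = 0"
    using compositions_zero(6)[OF maps_closed(1)[OF N_M1[OF w(1)]]] .
  ultimately show ?thesis
    using a10_a01_closed[OF w(1)] by blast
qed

lemma a21_surj_with_a01_eq_0:
  assumes "v \<in> N"
  shows "\<exists>t\<in>N. a01 M t = 0 \<and> a21 M t = a21 M v"
proof -
  obtain w where w: "w \<in> N" "v = nmul p w"
    using N_divide[OF assms] .
  obtain q where q: "nmul p w - a10 M (a01 M w) = T q" "q \<in> N"
    using nmul_diff_a10_a01_in_T_image[OF w(1)] by (rule imageE)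
  then have Tq: "T q = v - a10 M (a01 M w)"
    using w(2) by simp
  have "a01 M (T q) = 0"
    using compositions_zero(1)[OF maps_closed(4)[OF N_M1[OF q(2)]]] .
  moreover have "a21 M (T q) = a21 M v - a21 M (a10 M (a01 M w))"
    unfolding Tq using maps_diff(4)[OF N_M1[OF assms] N_M1[OF a10_a01_closed[OF w(1)]]] .
  then have "a21 M (T q) = a21 M v"
    using compositions_zero(6)[OF maps_closed(1)[OF N_M1[OF w(1)]]] by simp
  ultimately show ?thesis
    using T_closed_N[OF q(2)] by blast
qed

lemma a01_a21_surj:
  assumes "u \<in> N" "v \<in> N"
  shows "\<exists>x\<in>N. a01 M x = a01 M u \<and> a21 M x = a21 M v"
proof -
  obtain e t where e: "e \<in> N" "a01 M e = a01 M u" "a21 M e = 0"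
    and t: "t \<in> N" "a01 M t = 0" "a21 M t = a21 M v"
    using a01_surj_with_a21_eq_0[OF assms(1)] a21_surj_with_a01_eq_0[OF assms(2)] by blast
  then have "a01 M (e + t) = a01 M u" "a21 M (e + t) = a21 M v"
    using maps_add(1,4)[OF N_M1[OF e(1)] N_M1[OF t(1)]] by simp_all
  then show ?thesis
    using subgrp_add[OF N_subgrp e(1) t(1)] by blast
qed

lemma s_homogeneous:
  assumes "x \<in> N1 d"
  shows "s x \<in> N1 d"
proof -
  have x: "x \<in> kM1 M d" "x \<in> N"
    using assms N_pieces(1,3) by blast+
  then have "T x \<in> kM1 M d"
    using maps_homogeneous(2,3) by fastforce
  then have "s x \<in> kM1 M d"
    using subgrp_diff[OF graded_group_piece_subgrp[OF graded(2)] x(1)] by blast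
  then show ?thesis
    using graded_subgroup_homogeneous[OF graded_subgroup graded(2) s_closed[OF x(2)]] by blast
qed

lemma homogeneous_component_eq_0:
  assumes "y \<in> N1 e" "a01 M y \<in> kM0 M (\<not> e)" "a21 M y \<in> kM2 M e"
  shows "y = 0"
proof -
  have "a01 M y \<in> kM0 M e" "a21 M y \<in> kM2 M (\<not> e)"
    using assms(1) N_pieces(1) maps_homogeneous(1,2) by blast+
  moreover have "kM0 M e \<inter> kM0 M (\<not> e) = {0}" "kM2 M e \<inter> kM2 M (\<not> e) = {0}"
    using graded(1,3) unfolding graded_group_def by (cases e; auto)+
  ultimately have "a01 M y = 0" "a21 M y = 0"
    using assms(2,3) by blast+
  then show ?thesis
    using a01_a21_eq_0_imp_eq_0 assms(1) N_pieces(3) by blast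
qed

text \<open>The component of \<open>x\<close> of the wrong degree is killed by \<open>\<alpha>\<^sub>0\<^sub>1\<close> and \<open>\<alpha>\<^sub>2\<^sub>1\<close>, hence vanishes.\<close>

lemma homogeneous_if_images_homogeneous:
  assumes "x \<in> N" "a01 M x \<in> kM0 M d" "a21 M x \<in> kM2 M (\<not> d)"
  shows "x \<in> N1 d"
proof -
  obtain c c' where c: "x = c + c'" "c \<in> N1 d" "c' \<in> N1 (\<not> d)"
    using car_split[OF assms(1)] .
  have in_M1: "c \<in> M1" "c' \<in> M1"
    using c(2,3) N_pieces(3) N_M1 by blast+
  have "a01 M c' = a01 M x - a01 M c" "a21 M c' = a21 M x - a21 M c"
    using maps_add(1,4)[OF in_M1] c(1) by simp_all
  moreover have "a01 M c \<in> kM0 M d" "a21 M c \<in> kM2 M (\<not> d)"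
    using c(2) N_pieces(1) maps_homogeneous(1,2) by blast+
  ultimately have "a01 M c' \<in> kM0 M (\<not> \<not> d)" "a21 M c' \<in> kM2 M (\<not> d)"
    using subgrp_diff[OF graded_group_piece_subgrp[OF graded(1)] assms(2)]
      subgrp_diff[OF graded_group_piece_subgrp[OF graded(3)] assms(3)] by simp_all
  then have "c' = 0"
    using homogeneous_component_eq_0[OF c(3)] by blast
  then show ?thesis
    using c(1,2) by simp
qed

abbreviation "N0 \<equiv> \<lambda>d. a01 M ` N1 d"
abbreviation "N2 \<equiv> \<lambda>d. a21 M ` N1 (\<not> d)"
abbreviation "M' \<equiv> M\<lparr>kM0 := N0, kM1 := N1, kM2 := N2\<rparr>"

lemma car_N0: "car N0 = a01 M ` N"
  using car_image[OF N_graded additive_on_subset[OF maps_additive(1)]] N_M1 by blast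

lemma car_N2: "car N2 = a21 M ` N"
  using car_image[OF N_graded additive_on_subset[OF maps_additive(4)]] N_M1
    car_flip[of "\<lambda>d. a21 M ` N1 d"] by blast

lemma N0_graded: "graded_group N0" "graded_subgroup N0 (kM0 M)"
  using image_graded_subgroup[OF graded(2,1) ghoms(1) graded_subgroup] by simp_all

lemma N2_graded: "graded_group N2" "graded_subgroup N2 (kM2 M)"
  using image_graded_subgroup[OF graded(2,3) ghoms(4) graded_subgroup]
    graded_group_flip graded_subgroup_flip by fastforce+

lemma zero_in_images: "0 \<in> a01 M ` N" "0 \<in> a21 M ` N"
  using subgrp_zero[OF N_subgrp] maps_zero(1,4) by (metis image_eqI)+

lemma ksubmodule_M': "ksubmodule M' M"
proof -
  have "a10 M ` a01 M ` N \<subseteq> N" "a12 M ` a21 M ` N \<subseteq> N"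
    using a10_a01_closed T_closed_N by blast+
  moreover have "a02 M ` a21 M ` N \<subseteq> a01 M ` N" "a20 M ` a01 M ` N \<subseteq> a21 M ` N"
    using compositions_zero(2,5) N_M1 zero_in_images by auto
  ultimately show ?thesis
    unfolding ksubmodule_def using N0_graded(2) N2_graded(2) graded_subgroup
    by (simp add: car_N0 car_N2)
qed

lemma kexact_M': "kexact M'"
proof -
  have "a02 M ` a21 M ` N = {0}" "a20 M ` a01 M ` N = {0}"
    using compositions_zero(2,5) N_M1 zero_in_images by force+
  moreover have "{x \<in> a01 M ` N. a10 M x = 0} = {0}" "{x \<in> a21 M ` N. a12 M x = 0} = {0}"
    using ker_a10_on_a01_image ker_a12_on_a21_image zero_in_images by auto
  moreover have "a10 M ` a01 M ` N = {x \<in> N. a21 M x = 0}"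
    using ker_a21_on_N a10_a01_closed compositions_zero(6) maps_closed(1) N_M1 by fastforce
  moreover have "a12 M ` a21 M ` N = {x \<in> N. a01 M x = 0}"
    using ker_a01_on_N T_closed_N compositions_zero(1) maps_closed(4) N_M1 by fastforce
  moreover have "{x \<in> a21 M ` N. a02 M x = 0} = a21 M ` N" "{x \<in> a01 M ` N. a20 M x = 0} = a01 M ` N"
    using compositions_zero(2,5) N_M1 by auto
  ultimately show ?thesis
    unfolding kexact_def exact_at_def by (simp add: car_N0 car_N2)
qed

lemma a01_image_torsion_free:
  assumes "y \<in> a01 M ` N" "nmul p y = 0"
  shows "y = 0"
proof -
  obtain x where x: "x \<in> N" "y = a01 M x"
    using assms(1) by blast
  then have "y \<in> M0" "a10 M y \<in> N"
    using maps_closed(1) N_M1 a10_a01_closed by simp_all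
  moreover have "nmul p (a10 M y) = 0"
    using maps_nmul(2)[OF \<open>y \<in> M0\<close>, symmetric] assms(2) by simp
  ultimately have "a10 M y = 0"
    using N_torsion_free by blast
  then show ?thesis
    using ker_a10_on_a01_image[OF assms(1)] by simp
qed

lemma a21_image_torsion_free:
  assumes "y \<in> a21 M ` N" "nmul p y = 0"
  shows "y = 0"
proof -
  obtain x where x: "x \<in> N" "y = a21 M x"
    using assms(1) by blast
  then have "y \<in> M2" "a12 M y \<in> N"
    using maps_closed(4) N_M1 T_closed_N by simp_all
  moreover have "nmul p (a12 M y) = 0"
    using maps_nmul(3)[OF \<open>y \<in> M2\<close>, symmetric] assms(2) by simp
  ultimately have "a12 M y = 0"
    using N_torsion_free by blast
  then show ?thesis
    using ker_a12_on_a21_image[OF assms(1)] by simp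
qed

lemma uniq_pdiv_N0: "uniq_pdiv p N0"
  unfolding uniq_pdiv_def car_N0
  using bij_nmul_image[OF N_subgrp additive_on_subset[OF maps_additive(1)] _ a01_image_torsion_free]
    uniq_pdiv N_M1 unfolding uniq_pdiv_def by blast

lemma uniq_pdiv_N2: "uniq_pdiv p N2"
  unfolding uniq_pdiv_def car_N2
  using bij_nmul_image[OF N_subgrp additive_on_subset[OF maps_additive(4)] _ a21_image_torsion_free]
    uniq_pdiv N_M1 unfolding uniq_pdiv_def by blast

lemma kuniq_pdiv_M': "kuniq_pdiv p M'"
  unfolding kuniq_pdiv_def using uniq_pdiv_N0 uniq_pdiv uniq_pdiv_N2 by simp

abbreviation s2 :: "'a \<Rightarrow> 'a" where "s2 \<equiv> \<lambda>y. y - a21 M (a12 M y)"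

lemma car_Z: "car (\<lambda>d. a21 M ` N1 d) = a21 M ` N"
  using car_N2 car_flip[of "\<lambda>d. a21 M ` N1 d"] by simp

lemma ghom_s2: "ghom False (\<lambda>d. a21 M ` N1 d) (\<lambda>d. a21 M ` N1 d) s2"
  unfolding ghom_def
proof (intro conjI allI ballI)
  fix d z assume "z \<in> a21 M ` N1 d"
  then obtain y where y: "y \<in> N1 d" "z = a21 M y"
    by blast
  then have "y \<in> M1"
    using N_pieces(3) N_M1 by blast
  then have "s2 z = a21 M (s y)"
    using maps_diff(4)[OF _ T_closed] y(2) by simp
  then show "s2 z \<in> a21 M ` N1 (d \<noteq> False)"
    using s_homogeneous[OF y(1)] by simp
next
  fix x y assume "x \<in> car (\<lambda>d. a21 M ` N1 d)" "y \<in> car (\<lambda>d. a21 M ` N1 d)"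
  then have "x \<in> M2" "y \<in> M2"
    unfolding car_Z using maps_closed(4) N_M1 by blast+
  then show "s2 (x + y) = s2 x + s2 y"
    using maps_add(3,4) maps_closed(3) by simp
qed

lemma Nop_s2_eq_0:
  assumes "z \<in> a21 M ` N"
  shows "Nop p s2 z = 0"
proof -
  have "z \<in> M2" "a02 M z = 0"
    using assms maps_closed(4) compositions_zero(2) N_M1 by blast+
  then show ?thesis
    using Nop_t2_add_Nop_s2[of z] Nop_fixed_point[of "\<lambda>y. y - a20 M (a02 M y)" z p]
    by (simp add: maps_zero)
qed

lemma Zth_module_Z: "Zth_module p (\<lambda>d. a21 M ` N1 d) s2"
  unfolding Zth_module_def
  using image_graded_subgroup(1)[OF graded(2,3) ghoms(4) graded_subgroup] uniq_pdiv_N2 ghom_s2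
    Nop_s2_eq_0
  unfolding uniq_pdiv_def car_N2 car_Z by simp

lemma a01_a21_image: "(\<lambda>x. (a01 M x, a21 M x)) ` N1 d = a01 M ` N1 d \<times> a21 M ` N1 d"
proof (intro equalityI subsetI)
  fix z assume "z \<in> a01 M ` N1 d \<times> a21 M ` N1 d"
  then obtain u v where uv: "u \<in> N1 d" "v \<in> N1 d" "z = (a01 M u, a21 M v)"
    by blast
  then obtain x where x: "x \<in> N" "a01 M x = a01 M u" "a21 M x = a21 M v"
    using a01_a21_surj N_pieces(3) by blast
  have "a01 M x \<in> kM0 M d" "a21 M x \<in> kM2 M (\<not> d)"
    unfolding x(2,3) using uv(1,2) N_pieces(1) maps_homogeneous(1,2) by blast+
  then have "x \<in> N1 d"
    using homogeneous_if_images_homogeneous[OF x(1)] by blast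
  moreover have "z = (a01 M x, a21 M x)"
    using x(2,3) uv(3) by simp
  ultimately show "z \<in> (\<lambda>x. (a01 M x, a21 M x)) ` N1 d"
    by blast
qed blast

text \<open>The witnesses: \<open>Y = 0\<close>, \<open>\<vartheta>\<close> acts on \<open>Z = \<alpha>\<^sub>2\<^sub>1(N)\<close> as \<open>s\<^sub>2\<close>, and \<open>M'\<^sub>1 \<cong> X \<times> Z\<close> via
  \<open>x \<mapsto> (\<alpha>\<^sub>0\<^sub>1 x, \<alpha>\<^sub>2\<^sub>1 x)\<close>.\<close>

lemma exists_Emod_iso:
  "\<exists>Y thY thZ f0 f1 f2.
     Zp_module p (kM0 M') \<and> Zth_module p Y thY \<and> Zth_module p (\<lambda>d. kM2 M' (\<not> d)) thZ
     \<and> kiso M' (Emod p (kM0 M') Y thY (\<lambda>d. kM2 M' (\<not> d)) thZ) f0 f1 f2"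
proof (intro exI conjI)
  show "Zp_module p (kM0 M')"
    unfolding Zp_module_def using N0_graded(1) uniq_pdiv_N0 by simp
  show "Zth_module p (\<lambda>_. {0}) (\<lambda>_. 0)"
    by (rule Zth_module_zero)
  show "Zth_module p (\<lambda>d. kM2 M' (\<not> d)) s2"
    using Zth_module_Z by simp
  have f0: "gbij N0 (\<lambda>d. N0 d \<times> {0}) (\<lambda>m. (m, 0))"
    by (rule gbijI[OF N0_graded(1)]) (auto simp: additive_on_def zero_prod_def)
  have f1: "gbij N1 (\<lambda>d. N0 d \<times> a21 M ` N1 d) (\<lambda>x. (a01 M x, a21 M x))"
  proof (rule gbijI[OF N_graded a01_a21_image])
    show "additive_on N (\<lambda>x. (a01 M x, a21 M x))"
      unfolding additive_on_def using maps_add(1,4) N_M1 by simp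
    show "\<And>x. x \<in> N \<Longrightarrow> (a01 M x, a21 M x) = 0 \<Longrightarrow> x = 0"
      using a01_a21_eq_0_imp_eq_0 by (simp add: zero_prod_def)
  qed
  have f2: "gbij N2 (\<lambda>d. {0} \<times> N2 d) (\<lambda>z. (0, z))"
    by (rule gbijI[OF N2_graded(1)]) (auto simp: additive_on_def zero_prod_def)
  have "\<forall>x\<in>a01 M ` N. (a01 M (a10 M x), a21 M (a10 M x)) = (nmul p x, 0)"
    and "\<forall>x\<in>a21 M ` N. (a01 M (a12 M x), a21 M (a12 M x)) = (0, x - s2 x)"
    and "\<forall>x\<in>a21 M ` N. a02 M x = 0" "\<forall>x\<in>a01 M ` N. a20 M x = 0"
    using a01_a10_a01 compositions_zero maps_closed N_M1 by auto
  with f0 f1 f2 show "kiso M' (Emod p (kM0 M') (\<lambda>_. {0}) (\<lambda>_. 0) (\<lambda>d. kM2 M' (\<not> d)) s2)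
     (\<lambda>m. (m, 0)) (\<lambda>x. (a01 M x, a21 M x)) (\<lambda>z. (0, z))"
    unfolding kiso_def Emod_def by (simp add: car_N0 car_N2)
qed

lemma a02_in_a01_image_iff: "x \<in> M2 \<Longrightarrow> a02 M x \<in> a01 M ` N \<longleftrightarrow> a02 M x = 0"
  using ker_a10_on_a01_image compositions_zero(3) zero_in_images(1) by auto

lemma a20_in_a21_image_iff: "x \<in> M0 \<Longrightarrow> a20 M x \<in> a21 M ` N \<longleftrightarrow> a20 M x = 0"
  using ker_a12_on_a21_image compositions_zero(4) zero_in_images(2) by auto

lemma a10_in_N_iff: "x \<in> M0 \<Longrightarrow> a10 M x \<in> N \<longleftrightarrow> (\<exists>w\<in>N. a10 M x = a10 M (a01 M w))"
  using ker_a21_on_N compositions_zero(6) a10_a01_closed by auto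

lemma a12_in_N_iff: "x \<in> M2 \<Longrightarrow> a12 M x \<in> N \<longleftrightarrow> (\<exists>q\<in>N. a12 M x = T q)"
  using ker_a01_on_N compositions_zero(1) T_closed_N by auto

lemma kquot_exact_M':
  assumes "kexact M"
  shows "kquot_exact M M'"
proof -
  have exact: "exact_at M0 (a10 M) M1 (a21 M)" "exact_at M1 (a21 M) M2 (a02 M)"
      "exact_at M2 (a02 M) M0 (a10 M)" "exact_at M0 (a20 M) M2 (a12 M)"
      "exact_at M2 (a12 M) M1 (a01 M)" "exact_at M1 (a01 M) M0 (a20 M)"
    using assms unfolding kexact_def by simp_all
  have N0_M0: "a01 M ` N \<subseteq> M0" and N_M1': "N \<subseteq> M1" and N2_M2: "a21 M ` N \<subseteq> M2"
    using maps_closed(1,4) N_M1 by blast+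
  have a02_a21: "a02 M (a21 M x) = 0" and a20_a01: "a20 M (a01 M x) = 0" if "x \<in> N" for x
    using that compositions_zero(2,5) N_M1 by blast+
  have "quot_exact_at M0 (a10 M) M1 N (a21 M) (a21 M ` N)"
    by (rule quot_exact_atI[OF exact(1) subgrps(2) maps_additive(4) N_M1']) blast
  moreover have "quot_exact_at M1 (a21 M) M2 (a21 M ` N) (a02 M) (a01 M ` N)"
    by (rule quot_exact_atI[OF exact(2) subgrps(3) maps_additive(5) N2_M2])
      (use a02_in_a01_image_iff a02_a21 zero_in_images(2) in fastforce)
  moreover have "quot_exact_at M2 (a02 M) M0 (a01 M ` N) (a10 M) N"
    by (rule quot_exact_atI[OF exact(3) subgrps(1) maps_additive(2) N0_M0])
      (use a10_in_N_iff in blast)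
  moreover have "quot_exact_at M0 (a20 M) M2 (a21 M ` N) (a12 M) N"
    by (rule quot_exact_atI[OF exact(4) subgrps(3) maps_additive(3) N2_M2])
      (use a12_in_N_iff in blast)
  moreover have "quot_exact_at M2 (a12 M) M1 N (a01 M) (a01 M ` N)"
    by (rule quot_exact_atI[OF exact(5) subgrps(2) maps_additive(1) N_M1']) blast
  moreover have "quot_exact_at M1 (a01 M) M0 (a01 M ` N) (a20 M) (a21 M ` N)"
    by (rule quot_exact_atI[OF exact(6) subgrps(1) maps_additive(6) N0_M0])
      (use a20_in_a21_image_iff a20_a01 zero_in_images(1) in fastforce)
  ultimately show ?thesis
    unfolding kquot_exact_def by (simp add: car_N0 car_N2)
qed

end

theorem theorem7p13:
  fixes p :: nat and M :: "'a::ab_group_add kmod" and N1 :: "bool \<Rightarrow> 'a set"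
  assumes "prime p"
    and "kmodule p M" and "kexact M"
    and "graded_subgroup N1 (kM1 M)"
    and "\<forall>x\<in>car N1. x - a12 M (a21 M x) \<in> car N1"
    and "uniq_pdiv p N1"
  defines "M' \<equiv> M\<lparr> kM0 := (\<lambda>d. a01 M ` N1 d), kM1 := N1, kM2 := (\<lambda>d. a21 M ` N1 (\<not> d)) \<rparr>"
  shows "ksubmodule M' M \<and> kmodule p M' \<and> kexact M' \<and> kuniq_pdiv p M'
       \<and> (\<exists>Y thY thZ f0 f1 f2.
             Zp_module p (kM0 M') \<and> Zth_module p Y thY
             \<and> Zth_module p (\<lambda>d. kM2 M' (\<not> d)) thZ
             \<and> kiso M' (Emod p (kM0 M') Y thY (\<lambda>d. kM2 M' (\<not> d)) thZ) f0 f1 f2)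
       \<and> kquot_exact M M'"
proof -
  interpret s1_invariant_divisible_subgroup p M N1
    using assms(2,4-6) by unfold_locales
  show ?thesis
    unfolding M'_def
    using ksubmodule_M' ksubmodule_kmodule[OF kmodule ksubmodule_M'] kexact_M' kuniq_pdiv_M'
      exists_Emod_iso kquot_exact_M'[OF assms(3)]
    by blast
qed

end
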